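(* Let $X_1,X_2,\ldots$ be i.i.d. with mean $0$ and variance $1$, $Z_1,Z_2,\ldots$ i.i.d. $N(0,1)$ independent of the $X$'s, and $G_n\in\mathscr G_n$ with $|E(G_n)|\to\infty$. Fix $M$ with $b_M>0$ and fix $K_1,K_2\ge1$. Then for every $\varepsilon>0$, $$\lim_{n\to\infty}\Pr(|U_{11,n,M}+U_{12,n,M}|>\varepsilon)=0.$$
   Context: $\mathscr G_n$: simple undirected graphs on $\{1,\ldots,n\}$ labeled so that degrees satisfy $d_1\ge\cdots\ge d_n$; $A(G_n)=((a_{u,v}))$ adjacency matrix, $E(G_n)$ edge set. Truncation: $a_M=\mathbb E[X_1\mathbf 1\{|X_1|\le M\}]$, $b_M=\operatorname{Var}[X_1\mathbf 1\{|X_1|\le M\}]$, $X_{u,M}:=b_M^{-1/2}(X_u\mathbf 1\{|X_u|\le M\}-a_M)$. Vertex partition: $V_1=\{1,\ldots,\lfloor K_1\rfloor\}$, $V_2=\{\lfloor K_1\rfloor+1,\ldots,\lfloor K_2\sqrt{|E(G_n)|}\rfloor\}$, $V_3=\{\lfloor K_2\sqrt{|E(G_n)|}\rfloor+1,\ldots,n\}$. $A_{st}$ is the submatrix of $A(G_n)$ with rows indexed by $V_s$ and columns by $V_t$. $\bm X^{(1)}_{n,M}=(X_{u,M})_{u\in V_1}$, $\bm Z^{(2)}_n=(Z_u)_{u\in V_2}$. $U_{11,n,M}:=\frac{(\bm X^{(1)}_{n,M})^\top A_{11}\bm X^{(1)}_{n,M}}{2\sqrt{|E(G_n)|}}$ and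 $U_{12,n,M}:=\frac{(\bm X^{(1)}_{n,M})^\top A_{12}\bm Z^{(2)}_n}{\sqrt{|E(G_n)|}}$. *)

theory Defs
  imports "HOL-Probability.Probability"
begin

definition simple_graph_on :: "nat \<Rightarrow> (nat \<Rightarrow> nat \<Rightarrow> bool) \<Rightarrow> bool" where
  "simple_graph_on n E \<longleftrightarrow>
     (\<forall>u v. E u v \<longrightarrow> u \<in> {1..n} \<and> v \<in> {1..n} \<and> u \<noteq> v \<and> E v u)"

definition degree :: "nat \<Rightarrow> (nat \<Rightarrow> nat \<Rightarrow> bool) \<Rightarrow> nat \<Rightarrow> nat" where
  "degree n E u = card {v \<in> {1..n}. E u v}"

definition graph_class :: "nat \<Rightarrow> (nat \<Rightarrow> nat \<Rightarrow> bool) \<Rightarrow> bool" where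
  "graph_class n E \<longleftrightarrow> simple_graph_on n E \<and>
     (\<forall>u v. 1 \<le> u \<longrightarrow> u \<le> v \<longrightarrow> v \<le> n \<longrightarrow> degree n E v \<le> degree n E u)"

definition num_edges :: "nat \<Rightarrow> (nat \<Rightarrow> nat \<Rightarrow> bool) \<Rightarrow> nat" where
  "num_edges n E = card {(u, v). u \<in> {1..n} \<and> v \<in> {1..n} \<and> u < v \<and> E u v}"

definition adj :: "(nat \<Rightarrow> nat \<Rightarrow> bool) \<Rightarrow> nat \<Rightarrow> nat \<Rightarrow> real" where
  "adj E u v = (if E u v then 1 else 0)"

text \<open>Vertex blocks V_1 and V_2 (m = number of edges).\<close>
definition V1 :: "real \<Rightarrow> nat set" where
  "V1 K1 = {1..nat \<lfloor>K1\<rfloor>}"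

definition V2 :: "real \<Rightarrow> real \<Rightarrow> nat \<Rightarrow> nat set" where
  "V2 K1 K2 m = {nat \<lfloor>K1\<rfloor> + 1 .. nat \<lfloor>K2 * sqrt (real m)\<rfloor>}"

definition trunc :: "real \<Rightarrow> real \<Rightarrow> real" where
  "trunc M x = (if \<bar>x\<bar> \<le> M then x else 0)"

definition a_M :: "'a measure \<Rightarrow> (nat \<Rightarrow> 'a \<Rightarrow> real) \<Rightarrow> real \<Rightarrow> real" where
  "a_M P X M = prob_space.expectation P (\<lambda>\<omega>. trunc M (X 1 \<omega>))"

definition b_M :: "'a measure \<Rightarrow> (nat \<Rightarrow> 'a \<Rightarrow> real) \<Rightarrow> real \<Rightarrow> real" where
  "b_M P X M = prob_space.variance P (\<lambda>\<omega>. trunc M (X 1 \<omega>))"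

definition X_trunc :: "'a measure \<Rightarrow> (nat \<Rightarrow> 'a \<Rightarrow> real) \<Rightarrow> real \<Rightarrow> nat \<Rightarrow> 'a \<Rightarrow> real" where
  "X_trunc P X M u \<omega> = (trunc M (X u \<omega>) - a_M P X M) / sqrt (b_M P X M)"

definition U11 :: "'a measure \<Rightarrow> (nat \<Rightarrow> 'a \<Rightarrow> real) \<Rightarrow> real \<Rightarrow> real \<Rightarrow>
    nat \<Rightarrow> (nat \<Rightarrow> nat \<Rightarrow> bool) \<Rightarrow> 'a \<Rightarrow> real" where
  "U11 P X M K1 n E \<omega> =
     (\<Sum>u\<in>V1 K1. \<Sum>v\<in>V1 K1. X_trunc P X M u \<omega> * adj E u v * X_trunc P X M v \<omega>)
       / (2 * sqrt (real (num_edges n E)))"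

definition U12 :: "'a measure \<Rightarrow> (nat \<Rightarrow> 'a \<Rightarrow> real) \<Rightarrow> (nat \<Rightarrow> 'a \<Rightarrow> real) \<Rightarrow> real \<Rightarrow>
    real \<Rightarrow> real \<Rightarrow> nat \<Rightarrow> (nat \<Rightarrow> nat \<Rightarrow> bool) \<Rightarrow> 'a \<Rightarrow> real" where
  "U12 P X Z M K1 K2 n E \<omega> =
     (\<Sum>u\<in>V1 K1. \<Sum>v\<in>V2 K1 K2 (num_edges n E). X_trunc P X M u \<omega> * adj E u v * Z v \<omega>)
       / sqrt (real (num_edges n E))"

end

theory Submission
  imports Defs
begin

text \<open>The truncated variables are bounded by a constant and \<open>V\<^sub>1\<close> has boundedly many
vertices, so \<open>U\<^sub>1\<^sub>1 = O(1/\<surd>|E|)\<close> deterministically. Writing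
\<open>W\<^sub>u = \<Sum>{a\<^sub>u\<^sub>v Z\<^sub>v | v \<in> V\<^sub>2}\<close>, one has \<open>U\<^sub>1\<^sub>2 = \<Sum>{X\<^sub>u W\<^sub>u | u \<in> V\<^sub>1} / \<surd>|E|\<close>. The \<open>Z\<^sub>v\<close> are
orthonormal in \<open>L\<^sup>2\<close>, so \<open>E W\<^sub>u\<^sup>2 \<le> |V\<^sub>2| \<le> K\<^sub>2 \<surd>|E|\<close>, and Chebyshev's inequality gives
\<open>W\<^sub>u / \<surd>|E| \<rightarrow> 0\<close> in probability. Convergence to zero in probability is preserved by
bounded factors and finite sums.\<close>

definition (in prob_space) tendsto_zero_in_probability :: "(nat \<Rightarrow> 'a \<Rightarrow> real) \<Rightarrow> bool" where
  "tendsto_zero_in_probability Y \<longleftrightarrow> (\<forall>n. Y n \<in> borel_measurable M) \<and>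
     (\<forall>\<epsilon>>0. (\<lambda>n. prob {x \<in> space M. \<epsilon> < \<bar>Y n x\<bar>}) \<longlonglongrightarrow> 0)"

lemma (in prob_space) tendsto_zero_in_probabilityD:
  assumes "tendsto_zero_in_probability Y"
  shows "Y n \<in> borel_measurable M"
    and "\<epsilon> > 0 \<Longrightarrow> (\<lambda>n. prob {x \<in> space M. \<epsilon> < \<bar>Y n x\<bar>}) \<longlonglongrightarrow> 0"
  using assms unfolding tendsto_zero_in_probability_def by auto

lemma (in prob_space) tendsto_zero_in_probability_zero:
  "tendsto_zero_in_probability (\<lambda>n x. 0)"
  unfolding tendsto_zero_in_probability_def by simp

lemma (in prob_space) tendsto_zero_in_probability_if_dominated:
  assumes "\<And>n. Y n \<in> borel_measurable M"
    and dom: "\<And>n x. x \<in> space M \<Longrightarrow> \<bar>Y n x\<bar> \<le> a n" and "a \<longlonglongrightarrow> 0"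
  shows "tendsto_zero_in_probability Y"
  unfolding tendsto_zero_in_probability_def
proof (intro conjI allI impI assms(1))
  fix \<epsilon> :: real assume "\<epsilon> > 0"
  with \<open>a \<longlonglongrightarrow> 0\<close> have "eventually (\<lambda>n. a n < \<epsilon>) sequentially"
    by (simp add: order_tendstoD(2))
  then have "eventually (\<lambda>n. prob {x \<in> space M. \<epsilon> < \<bar>Y n x\<bar>} = 0) sequentially"
  proof eventually_elim
    case (elim n)
    then have "{x \<in> space M. \<epsilon> < \<bar>Y n x\<bar>} = {}"
      using dom[of _ n] by force
    then show ?case by (simp only: measure_empty)
  qed
  then show "(\<lambda>n. prob {x \<in> space M. \<epsilon> < \<bar>Y n x\<bar>}) \<longlonglongrightarrow> 0"
    by (rule tendsto_eventually)
qed

lemma (in prob_space) tendsto_zero_in_probability_if_second_moment: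
  assumes [measurable]: "\<And>n. Y n \<in> borel_measurable M"
    and int: "\<And>n. integrable M (\<lambda>x. (Y n x)\<^sup>2)"
    and lim: "(\<lambda>n. expectation (\<lambda>x. (Y n x)\<^sup>2)) \<longlonglongrightarrow> 0"
  shows "tendsto_zero_in_probability Y"
  unfolding tendsto_zero_in_probability_def
proof (intro conjI allI impI assms(1))
  fix \<epsilon> :: real assume "\<epsilon> > 0"
  show "(\<lambda>n. prob {x \<in> space M. \<epsilon> < \<bar>Y n x\<bar>}) \<longlonglongrightarrow> 0"
  proof (rule Lim_null_comparison)
    show "\<forall>\<^sub>F n in sequentially.
        norm (prob {x \<in> space M. \<epsilon> < \<bar>Y n x\<bar>}) \<le> expectation (\<lambda>x. (Y n x)\<^sup>2) / \<epsilon>\<^sup>2"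
    proof (intro always_eventually allI)
      fix n
      have "prob {x \<in> space M. \<epsilon> < \<bar>Y n x\<bar>} \<le> prob {x \<in> space M. \<epsilon> \<le> \<bar>Y n x\<bar>}"
        by (intro finite_measure_mono) auto
      also have "\<dots> \<le> expectation (\<lambda>x. (Y n x)\<^sup>2) / \<epsilon>\<^sup>2"
        using second_moment_method[OF assms(1) int \<open>\<epsilon> > 0\<close>] by simp
      finally show "norm (prob {x \<in> space M. \<epsilon> < \<bar>Y n x\<bar>}) \<le> expectation (\<lambda>x. (Y n x)\<^sup>2) / \<epsilon>\<^sup>2"
        by simp
    qed
    show "(\<lambda>n. expectation (\<lambda>x. (Y n x)\<^sup>2) / \<epsilon>\<^sup>2) \<longlonglongrightarrow> 0"
      using tendsto_divide_zero[OF lim] .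
  qed
qed

lemma (in prob_space) tendsto_zero_in_probability_add:
  assumes Y: "tendsto_zero_in_probability Y" and Y': "tendsto_zero_in_probability Y'"
  shows "tendsto_zero_in_probability (\<lambda>n x. Y n x + Y' n x)"
proof -
  note [measurable] = tendsto_zero_in_probabilityD(1)[OF Y] tendsto_zero_in_probabilityD(1)[OF Y']
  have "(\<lambda>n. prob {x \<in> space M. \<epsilon> < \<bar>Y n x + Y' n x\<bar>}) \<longlonglongrightarrow> 0" if "\<epsilon> > 0" for \<epsilon>
  proof (rule Lim_null_comparison)
    let ?A = "\<lambda>n. {x \<in> space M. \<epsilon> / 2 < \<bar>Y n x\<bar>}" and ?A' = "\<lambda>n. {x \<in> space M. \<epsilon> / 2 < \<bar>Y' n x\<bar>}"
    show "\<forall>\<^sub>F n in sequentially.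
        norm (prob {x \<in> space M. \<epsilon> < \<bar>Y n x + Y' n x\<bar>}) \<le> prob (?A n) + prob (?A' n)"
    proof (intro always_eventually allI)
      fix n
      have "prob {x \<in> space M. \<epsilon> < \<bar>Y n x + Y' n x\<bar>} \<le> prob (?A n \<union> ?A' n)"
        by (intro finite_measure_mono) auto
      also have "\<dots> \<le> prob (?A n) + prob (?A' n)"
        by (intro measure_subadditive) (auto simp: emeasure_eq_measure)
      finally show "norm (prob {x \<in> space M. \<epsilon> < \<bar>Y n x + Y' n x\<bar>}) \<le> prob (?A n) + prob (?A' n)"
        by simp
    qed
    have "\<epsilon> / 2 > 0"
      using that by simp
    then show "(\<lambda>n. prob (?A n) + prob (?A' n)) \<longlonglongrightarrow> 0"
      by (intro tendsto_add_zero tendsto_zero_in_probabilityD(2)[OF Y] tendsto_zero_in_probabilityD(2)[OF Y'])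
  qed
  then show ?thesis
    unfolding tendsto_zero_in_probability_def by simp
qed

lemma (in prob_space) tendsto_zero_in_probability_sum:
  assumes "\<And>i. i \<in> I \<Longrightarrow> tendsto_zero_in_probability (Y i)"
  shows "tendsto_zero_in_probability (\<lambda>n x. \<Sum>i\<in>I. Y i n x)"
  using assms
proof (induction I rule: infinite_finite_induct)
  case (insert i I)
  then show ?case
    by (simp add: tendsto_zero_in_probability_add)
qed (simp_all add: tendsto_zero_in_probability_zero)

lemma (in prob_space) tendsto_zero_in_probability_bounded_mult:
  assumes [measurable]: "\<And>n. c n \<in> borel_measurable M"
    and bounded: "\<And>n x. x \<in> space M \<Longrightarrow> \<bar>c n x\<bar> \<le> C"
    and Y: "tendsto_zero_in_probability Y"
  shows "tendsto_zero_in_probability (\<lambda>n x. c n x * Y n x)"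
proof -
  note [measurable] = tendsto_zero_in_probabilityD(1)[OF Y]
  define D where "D = \<bar>C\<bar> + 1"
  have "D > 0" by (simp add: D_def add_nonneg_pos)
  have "(\<lambda>n. prob {x \<in> space M. \<epsilon> < \<bar>c n x * Y n x\<bar>}) \<longlonglongrightarrow> 0" if "\<epsilon> > 0" for \<epsilon>
  proof (rule Lim_null_comparison)
    show "\<forall>\<^sub>F n in sequentially.
        norm (prob {x \<in> space M. \<epsilon> < \<bar>c n x * Y n x\<bar>}) \<le> prob {x \<in> space M. \<epsilon> / D < \<bar>Y n x\<bar>}"
    proof (intro always_eventually allI)
      fix n
      have "{x \<in> space M. \<epsilon> < \<bar>c n x * Y n x\<bar>} \<subseteq> {x \<in> space M. \<epsilon> / D < \<bar>Y n x\<bar>}"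
      proof safe
        fix x assume x: "x \<in> space M" "\<epsilon> < \<bar>c n x * Y n x\<bar>"
        have "\<bar>c n x * Y n x\<bar> \<le> D * \<bar>Y n x\<bar>"
          using bounded[OF x(1), of n] by (auto simp: D_def abs_mult intro!: mult_right_mono)
        then show "\<epsilon> / D < \<bar>Y n x\<bar>"
          using x(2) \<open>D > 0\<close> by (simp add: pos_divide_less_eq mult.commute)
      qed
      then show "norm (prob {x \<in> space M. \<epsilon> < \<bar>c n x * Y n x\<bar>}) \<le> prob {x \<in> space M. \<epsilon> / D < \<bar>Y n x\<bar>}"
        by (simp add: finite_measure_mono)
    qed
    show "(\<lambda>n. prob {x \<in> space M. \<epsilon> / D < \<bar>Y n x\<bar>}) \<longlonglongrightarrow> 0"
      using \<open>D > 0\<close> that by (intro tendsto_zero_in_probabilityD(2)[OF Y]) simp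
  qed
  then show ?thesis
    unfolding tendsto_zero_in_probability_def by simp
qed

definition (in prob_space) orthonormal_vars :: "('i \<Rightarrow> 'a \<Rightarrow> real) \<Rightarrow> 'i set \<Rightarrow> bool" where
  "orthonormal_vars Y I \<longleftrightarrow> (\<forall>i\<in>I. \<forall>j\<in>I. integrable M (\<lambda>x. Y i x * Y j x) \<and>
     expectation (\<lambda>x. Y i x * Y j x) = (if i = j then 1 else 0))"

lemma (in prob_space) orthonormal_vars_reindex:
  assumes "orthonormal_vars Y (g ` J)" and "inj_on g J"
  shows "orthonormal_vars (\<lambda>j. Y (g j)) J"
  using assms unfolding orthonormal_vars_def inj_on_def by (metis image_eqI)

lemma (in prob_space) indep_vars_std_normal_orthonormal:
  assumes indep: "indep_vars (\<lambda>_. borel) Y I"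
    and normal: "\<And>i. i \<in> I \<Longrightarrow> distributed M lborel (Y i) std_normal_density"
  shows "orthonormal_vars Y I"
  unfolding orthonormal_vars_def
proof (intro ballI)
  fix i j assume ij: "i \<in> I" "j \<in> I"
  have int: "integrable M (Y k)" if "k \<in> I" for k
    using distributed_integrable[OF normal[OF that], of "\<lambda>x. x"] integrable_std_normal_moment[of 1]
    by simp
  show "integrable M (\<lambda>x. Y i x * Y j x) \<and>
      expectation (\<lambda>x. Y i x * Y j x) = (if i = j then 1 else 0)"
  proof (cases "i = j")
    case True
    have "integrable M (\<lambda>x. (Y i x)\<^sup>2)"
      using distributed_integrable[OF normal[OF ij(1)], of "\<lambda>x. x\<^sup>2"] integrable_std_normal_moment[of 2]
      by simp
    moreover have "expectation (\<lambda>x. (Y i x)\<^sup>2) = 1"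
      using standard_normal_distributed_variance[OF normal[OF ij(1)]]
        standard_normal_distributed_expectation[OF normal[OF ij(1)]]
        variance_eq[OF int[OF ij(1)] calculation] by simp
    ultimately show ?thesis
      using True by (simp add: power2_eq_square)
  next
    case False
    have pair: "indep_vars (\<lambda>_. borel) Y {i, j}"
      by (rule indep_vars_subset[OF indep]) (use ij in auto)
    have prod: "(\<Prod>k\<in>{i, j}. Y k x) = Y i x * Y j x" for x
      using False by simp
    have "integrable M (\<lambda>x. \<Prod>k\<in>{i, j}. Y k x)"
      by (rule indep_vars_integrable[OF _ pair]) (use ij int in auto)
    moreover have "expectation (\<lambda>x. \<Prod>k\<in>{i, j}. Y k x) = (\<Prod>k\<in>{i, j}. expectation (Y k))"
      by (rule indep_vars_lebesgue_integral[OF _ pair]) (use ij int in auto)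
    ultimately show ?thesis
      using False standard_normal_distributed_expectation[OF normal[OF ij(1)]] by (simp add: prod)
  qed
qed

lemma (in prob_space) indep_vars_Inr_std_normal_orthonormal:
  assumes indep: "indep_vars (\<lambda>_. borel) (\<lambda>i. case i of Inl u \<Rightarrow> X u | Inr v \<Rightarrow> Z v) UNIV"
    and normal: "\<And>v. distributed M lborel (Z v) std_normal_density"
  shows "orthonormal_vars Z UNIV"
proof -
  have "orthonormal_vars (\<lambda>i. case i of Inl u \<Rightarrow> X u | Inr v \<Rightarrow> Z v) (range Inr)"
    by (rule indep_vars_std_normal_orthonormal[OF indep_vars_subset[OF indep]]) (auto simp: normal)
  from orthonormal_vars_reindex[OF this] show ?thesis
    by simp
qed

lemma (in prob_space) expectation_orthonormal_sum_square:
  assumes orth: "orthonormal_vars Y I" and "finite T" "T \<subseteq> I"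
  shows "integrable M (\<lambda>x. (\<Sum>i\<in>T. c i * Y i x)\<^sup>2)"
    and "expectation (\<lambda>x. (\<Sum>i\<in>T. c i * Y i x)\<^sup>2) = (\<Sum>i\<in>T. (c i)\<^sup>2)"
proof -
  have square: "(\<Sum>i\<in>T. c i * Y i x)\<^sup>2 = (\<Sum>i\<in>T. \<Sum>j\<in>T. c i * c j * (Y i x * Y j x))" for x
    by (simp add: power2_eq_square sum_product algebra_simps)
  have orth_T: "integrable M (\<lambda>x. Y i x * Y j x) \<and>
      expectation (\<lambda>x. Y i x * Y j x) = (if i = j then 1 else 0)" if "i \<in> T" "j \<in> T" for i j
    using orth \<open>T \<subseteq> I\<close> that unfolding orthonormal_vars_def by blast
  note int = conjunct1[OF orth_T] and exp = conjunct2[OF orth_T]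
  show "integrable M (\<lambda>x. (\<Sum>i\<in>T. c i * Y i x)\<^sup>2)"
    unfolding square by (simp add: int)
  have "expectation (\<lambda>x. (\<Sum>i\<in>T. c i * Y i x)\<^sup>2)
      = (\<Sum>i\<in>T. \<Sum>j\<in>T. c i * c j * expectation (\<lambda>x. Y i x * Y j x))"
    unfolding square by (simp add: int integrable_sum)
  also have "\<dots> = (\<Sum>i\<in>T. (c i)\<^sup>2)"
    using \<open>finite T\<close> by (simp add: exp power2_eq_square if_distrib sum.delta cong: if_cong)
  finally show "expectation (\<lambda>x. (\<Sum>i\<in>T. c i * Y i x)\<^sup>2) = (\<Sum>i\<in>T. (c i)\<^sup>2)" .
qed

lemma (in prob_space) tendsto_zero_in_probability_orthonormal_sum:
  assumes [measurable]: "\<And>i. Y i \<in> borel_measurable M"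
    and orth: "orthonormal_vars Y I" and T: "\<And>n. finite (T n)" "\<And>n. T n \<subseteq> I"
    and c: "\<And>n i. i \<in> T n \<Longrightarrow> \<bar>c n i\<bar> \<le> 1"
    and card: "(\<lambda>n. real (card (T n)) / (s n)\<^sup>2) \<longlonglongrightarrow> 0"
  shows "tendsto_zero_in_probability (\<lambda>n x. (\<Sum>i\<in>T n. c n i * Y i x) / s n)"
proof (rule tendsto_zero_in_probability_if_second_moment)
  show "(\<lambda>x. (\<Sum>i\<in>T n. c n i * Y i x) / s n) \<in> borel_measurable M" for n
    by measurable
  show "integrable M (\<lambda>x. ((\<Sum>i\<in>T n. c n i * Y i x) / s n)\<^sup>2)" for n
    using expectation_orthonormal_sum_square(1)[OF orth T(1,2)] by (simp add: power_divide)
  have second_moment: "expectation (\<lambda>x. ((\<Sum>i\<in>T n. c n i * Y i x) / s n)\<^sup>2)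
      = (\<Sum>i\<in>T n. (c n i)\<^sup>2) / (s n)\<^sup>2" for n
    using expectation_orthonormal_sum_square(2)[OF orth T(1,2)] by (simp add: power_divide)
  show "(\<lambda>n. expectation (\<lambda>x. ((\<Sum>i\<in>T n. c n i * Y i x) / s n)\<^sup>2)) \<longlonglongrightarrow> 0"
    unfolding second_moment
  proof (rule Lim_null_comparison[OF always_eventually card], intro allI)
    fix n
    have "(\<Sum>i\<in>T n. (c n i)\<^sup>2) \<le> real (card (T n)) * 1"
      by (rule sum_bounded_above) (simp add: abs_square_le_1 c)
    then show "norm ((\<Sum>i\<in>T n. (c n i)\<^sup>2) / (s n)\<^sup>2) \<le> real (card (T n)) / (s n)\<^sup>2"
      by (simp add: divide_right_mono sum_nonneg)
  qed
qed

lemma abs_quadratic_form_adj_le: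
  assumes "\<And>u. u \<in> S \<Longrightarrow> \<bar>x u\<bar> \<le> C"
  shows "\<bar>\<Sum>u\<in>S. \<Sum>v\<in>S. x u * adj E u v * x v\<bar> \<le> (real (card S) * C)\<^sup>2"
proof -
  have "\<bar>\<Sum>u\<in>S. \<Sum>v\<in>S. x u * adj E u v * x v\<bar> \<le> (\<Sum>u\<in>S. \<Sum>v\<in>S. \<bar>x u\<bar> * \<bar>x v\<bar>)"
    by (rule order.trans[OF sum_abs sum_mono], rule order.trans[OF sum_abs sum_mono])
      (simp add: abs_mult adj_def)
  also have "\<dots> = (\<Sum>u\<in>S. \<bar>x u\<bar>)\<^sup>2"
    by (simp add: power2_eq_square sum_product)
  also have "\<dots> \<le> (real (card S) * C)\<^sup>2"
    by (intro power_mono sum_bounded_above assms) (auto intro: sum_nonneg)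
  finally show ?thesis .
qed

lemma abs_X_trunc_le:
  assumes "b_M P X M \<ge> 0"
  shows "\<bar>X_trunc P X M u \<omega>\<bar> \<le> (\<bar>M\<bar> + \<bar>a_M P X M\<bar>) / sqrt (b_M P X M)"
proof -
  have "\<bar>trunc M (X u \<omega>) - a_M P X M\<bar> \<le> \<bar>M\<bar> + \<bar>a_M P X M\<bar>"
    unfolding trunc_def by auto
  then show ?thesis
    unfolding X_trunc_def using assms by (simp add: abs_div divide_right_mono)
qed

lemma borel_measurable_X_trunc [measurable]:
  assumes [measurable]: "X u \<in> borel_measurable P"
  shows "X_trunc P X M u \<in> borel_measurable P"
  unfolding X_trunc_def trunc_def by measurable

lemma abs_U11_le:
  assumes "\<And>u \<omega>. \<bar>X_trunc P X M u \<omega>\<bar> \<le> C"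
  shows "\<bar>U11 P X M K1 n E \<omega>\<bar> \<le> (real (card (V1 K1)) * C)\<^sup>2 / (2 * sqrt (real (num_edges n E)))"
  unfolding U11_def using abs_quadratic_form_adj_le[OF assms]
  by (simp add: abs_div divide_right_mono)

lemma U12_eq_sum:
  "U12 P X Z M K1 K2 n E \<omega> = (\<Sum>u\<in>V1 K1. X_trunc P X M u \<omega> *
     ((\<Sum>v\<in>V2 K1 K2 (num_edges n E). adj E u v * Z v \<omega>) / sqrt (real (num_edges n E))))"
  unfolding U12_def by (simp add: sum_divide_distrib sum_distrib_left mult.assoc)

lemma card_V2_le:
  assumes "K2 \<ge> 0"
  shows "real (card (V2 K1 K2 m)) \<le> K2 * sqrt (real m)"
proof -
  have "real (card (V2 K1 K2 m)) \<le> real (nat \<lfloor>K2 * sqrt (real m)\<rfloor>)"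
    unfolding V2_def by simp
  also have "\<dots> \<le> K2 * sqrt (real m)"
    using assms by (simp add: of_nat_nat)
  finally show ?thesis .
qed

lemma tendsto_card_V2_div_sqrt_square:
  assumes m: "filterlim (\<lambda>n. real (m n)) at_top sequentially" and "K2 \<ge> 0"
  shows "(\<lambda>n. real (card (V2 K1 K2 (m n))) / (sqrt (real (m n)))\<^sup>2) \<longlonglongrightarrow> 0"
proof (rule Lim_null_comparison)
  show "\<forall>\<^sub>F n in sequentially.
      norm (real (card (V2 K1 K2 (m n))) / (sqrt (real (m n)))\<^sup>2) \<le> K2 / sqrt (real (m n))"
  proof (intro always_eventually allI)
    fix n
    have "real (card (V2 K1 K2 (m n))) / (sqrt (real (m n)))\<^sup>2
        \<le> K2 * sqrt (real (m n)) / (sqrt (real (m n)))\<^sup>2"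
      using card_V2_le[OF \<open>K2 \<ge> 0\<close>] by (rule divide_right_mono) simp
    also have "K2 * s / s\<^sup>2 = K2 / s" for s :: real
      by (cases "s = 0") (simp_all add: power2_eq_square)
    finally show "norm (real (card (V2 K1 K2 (m n))) / (sqrt (real (m n)))\<^sup>2) \<le> K2 / sqrt (real (m n))"
      by simp
  qed
  show "(\<lambda>n. K2 / sqrt (real (m n))) \<longlonglongrightarrow> 0"
    by (intro tendsto_divide_0[OF tendsto_const] filterlim_at_top_imp_at_infinity
        filterlim_compose[OF sqrt_at_top m])
qed

theorem lemma3p3:
  fixes P :: "'a measure" and X Z :: "nat \<Rightarrow> 'a \<Rightarrow> real"
    and G :: "nat \<Rightarrow> nat \<Rightarrow> nat \<Rightarrow> bool"
    and M K1 K2 \<epsilon> :: real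
  assumes "prob_space P"
    and indep: "prob_space.indep_vars P (\<lambda>_. borel)
                  (\<lambda>i. case i of Inl u \<Rightarrow> X u | Inr v \<Rightarrow> Z v) (UNIV :: (nat + nat) set)"
    and X_id: "\<And>u. distr P borel (X u) = distr P borel (X 1)"
    and X_int: "integrable P (X 1)" and X_mean: "prob_space.expectation P (X 1) = 0"
    and X_sq_int: "integrable P (\<lambda>\<omega>. (X 1 \<omega>)\<^sup>2)"
    and X_var: "prob_space.variance P (X 1) = 1"
    and Z_normal: "\<And>v. distributed P lborel (Z v) std_normal_density"
    and G_class: "\<And>n. graph_class n (G n)"
    and G_edges: "filterlim (\<lambda>n. real (num_edges n (G n))) at_top sequentially"
    and bM: "b_M P X M > 0"
    and K1: "K1 \<ge> 1" and K2: "K2 \<ge> 1"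
    and eps: "\<epsilon> > 0"
  shows "(\<lambda>n. prob_space.prob P {\<omega> \<in> space P.
            \<bar>U11 P X M K1 n (G n) \<omega> + U12 P X Z M K1 K2 n (G n) \<omega>\<bar> > \<epsilon>})
         \<longlonglongrightarrow> 0"
proof -
  interpret prob_space P by fact
  have rv: "random_variable borel (case i of Inl u \<Rightarrow> X u | Inr v \<Rightarrow> Z v)" for i
    using indep unfolding indep_vars_def by blast
  have [measurable]: "X u \<in> borel_measurable P" "Z v \<in> borel_measurable P" for u v
    using rv[of "Inl u"] rv[of "Inr v"] by simp_all
  have orth: "orthonormal_vars Z UNIV"
    by (rule indep_vars_Inr_std_normal_orthonormal[OF indep Z_normal])
  define C where "C = (\<bar>M\<bar> + \<bar>a_M P X M\<bar>) / sqrt (b_M P X M)"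
  have X_bounded: "\<bar>X_trunc P X M u \<omega>\<bar> \<le> C" for u \<omega>
    unfolding C_def using abs_X_trunc_le[OF less_imp_le[OF bM]] .
  have U11: "tendsto_zero_in_probability (\<lambda>n. U11 P X M K1 n (G n))"
  proof (rule tendsto_zero_in_probability_if_dominated)
    show "U11 P X M K1 n (G n) \<in> borel_measurable P" for n
      unfolding U11_def by measurable
    show "\<bar>U11 P X M K1 n (G n) \<omega>\<bar> \<le> (real (card (V1 K1)) * C)\<^sup>2 / (2 * sqrt (num_edges n (G n)))"
      for n \<omega>
      by (rule abs_U11_le[OF X_bounded])
    show "(\<lambda>n. (real (card (V1 K1)) * C)\<^sup>2 / (2 * sqrt (num_edges n (G n)))) \<longlonglongrightarrow> 0"
      by (intro tendsto_divide_0[OF tendsto_const] filterlim_at_top_imp_at_infinity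
          filterlim_tendsto_pos_mult_at_top[OF tendsto_const _ filterlim_compose[OF sqrt_at_top G_edges]])
        simp
  qed
  have W: "tendsto_zero_in_probability (\<lambda>n \<omega>.
      (\<Sum>v\<in>V2 K1 K2 (num_edges n (G n)). adj (G n) u v * Z v \<omega>) / sqrt (num_edges n (G n)))" for u
    by (rule tendsto_zero_in_probability_orthonormal_sum[OF _ orth _ _ _
          tendsto_card_V2_div_sqrt_square[OF G_edges]])
      (use K2 in \<open>auto simp: V2_def adj_def\<close>)
  have U12: "tendsto_zero_in_probability (\<lambda>n \<omega>. U12 P X Z M K1 K2 n (G n) \<omega>)"
    unfolding U12_eq_sum
    by (intro tendsto_zero_in_probability_sum tendsto_zero_in_probability_bounded_mult[OF _ X_bounded W])
      measurable
  show ?thesis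
    using tendsto_zero_in_probabilityD(2)[OF tendsto_zero_in_probability_add[OF U11 U12] eps] .
qed

end
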